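(* Let $\mathcal{P}$ be a probability distribution over $\Omega=\mathcal{X}\times\mathcal{Y}\times[K]$, and let $\hat z:\mathcal{X}\to J$ be a proxy with finite range $J$, where every $j\in J$ has $\hat r_j:=\Pr_{(x,y,z)\sim\mathcal{P}}[\hat z(x)=j]>0$. For $j\in J$ let $a_j\in\mathbb{R}^K$ be the row vector with entries $a_{j,i}=\Pr_{(x,y,z)\sim\mathcal{P}}[z=i\mid \hat z(x)=j]$, and let $A$ be the $|J|\times K$ matrix with rows $a_j$. Let $U=(1/K,\dots,1/K)$. Let $q$ be any minimizer of $\lVert qA-U\rVert_2$ over stochastic row vectors $q\in\mathbb{R}^{|J|}$ (i.e. $q_j\ge 0$, $\sum_j q_j=1$), set $\rho_j=q_j/\hat r_j$, and normalize $\rho_j\leftarrow\rho_j/\max_{j'}\rho_{j'}$. Consider the sampling procedure: draw $(x,y,z)\sim\mathcal{P}$ (with $z$ unobserved), compute $\hat z(x)$, and accept the sample with probability $\rho_{\hat z(x)}$. If $U\in C(A)$, then the distribution of the protected attribute $z$ among accepted samples is uniform, i.e. $\Pr[z=i\mid \text{accepted}]=1/K$ for all $i\in[K]$.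
   Context: $C(A)$ denotes the convex hull of the rows of $A$, i.e. $\{\sum_j q_j a_j: q_j\ge 0,\ \sum_j q_j=1\}$. Here $x$ is the feature vector (excluding the sensitive attribute), $y\in\{0,1\}$ the label, and $z\in[K]$ the sensitive group. *)

theory Defs
  imports "HOL-Probability.Probability"
begin

text \<open>Samples are triples (x, y, z) :: 'x * 'y * nat; the sensitive attribute is
  z = snd (snd w), with groups [K] = {1..K}.\<close>

definition zattr :: "'x \<times> 'y \<times> nat \<Rightarrow> nat" where
  "zattr w = snd (snd w)"

definition rhat :: "('x \<times> 'y \<times> nat) measure \<Rightarrow> ('x \<Rightarrow> 'j) \<Rightarrow> 'j \<Rightarrow> real" where
  "rhat P zhat j = measure P {w \<in> space P. zhat (fst w) = j}"

definition amat :: "('x \<times> 'y \<times> nat) measure \<Rightarrow> ('x \<Rightarrow> 'j) \<Rightarrow> 'j \<Rightarrow> nat \<Rightarrow> real" where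
  "amat P zhat j i =
     measure P {w \<in> space P. zattr w = i \<and> zhat (fst w) = j} / rhat P zhat j"

definition stochastic :: "'j set \<Rightarrow> ('j \<Rightarrow> real) \<Rightarrow> bool" where
  "stochastic J q \<longleftrightarrow> (\<forall>j\<in>J. q j \<ge> 0) \<and> (\<Sum>j\<in>J. q j) = 1"

definition rowmul :: "'j set \<Rightarrow> ('j \<Rightarrow> real) \<Rightarrow> ('j \<Rightarrow> nat \<Rightarrow> real) \<Rightarrow> nat \<Rightarrow> real" where
  "rowmul J q A i = (\<Sum>j\<in>J. q j * A j i)"

definition distU :: "nat \<Rightarrow> 'j set \<Rightarrow> ('j \<Rightarrow> real) \<Rightarrow> ('j \<Rightarrow> nat \<Rightarrow> real) \<Rightarrow> real" where
  "distU K J q A = sqrt (\<Sum>i\<in>{1..K}. (rowmul J q A i - 1 / real K)\<^sup>2)"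

definition U_in_hull :: "nat \<Rightarrow> 'j set \<Rightarrow> ('j \<Rightarrow> nat \<Rightarrow> real) \<Rightarrow> bool" where
  "U_in_hull K J A \<longleftrightarrow> (\<exists>q. stochastic J q \<and> (\<forall>i\<in>{1..K}. rowmul J q A i = 1 / real K))"

definition rho :: "'j set \<Rightarrow> ('j \<Rightarrow> real) \<Rightarrow> ('j \<Rightarrow> real) \<Rightarrow> 'j \<Rightarrow> real" where
  "rho J q r j = (q j / r j) / Max ((\<lambda>j'. q j' / r j') ` J)"

text \<open>The sampling procedure: draw w ~ P and an independent u ~ Uniform[0,1];
  accept iff u < rho_{zhat(x)} (which happens with probability rho_{zhat(x)}).\<close>
definition proc :: "('x \<times> 'y \<times> nat) measure \<Rightarrow> (('x \<times> 'y \<times> nat) \<times> real) measure" where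
  "proc P = P \<Otimes>\<^sub>M uniform_measure lborel {0..1}"

definition accepted :: "('x \<times> 'y \<times> nat) measure \<Rightarrow> ('x \<Rightarrow> 'j) \<Rightarrow> ('j \<Rightarrow> real)
    \<Rightarrow> (('x \<times> 'y \<times> nat) \<times> real) set" where
  "accepted P zhat \<rho> = {p \<in> space (proc P). snd p < \<rho> (zhat (fst (fst p)))}"

end

theory Submission imports Defs begin

text \<open>Since \<open>U \<in> C(A)\<close>, the minimiser attains distance zero, i.e. \<open>qA = U\<close>. Proxy group \<open>j\<close> has mass
  \<open>r\<^sub>j\<close> and is accepted with probability \<open>\<rho>\<^sub>j = q\<^sub>j / (r\<^sub>j M)\<close>, so the accepted mass in group \<open>j\<close> is
  \<open>q\<^sub>j / M\<close>, of which the fraction \<open>a\<^sub>j\<^sub>i\<close> has \<open>z = i\<close>. Hence \<open>Pr[z = i, accepted] = (qA)\<^sub>i / M = 1/(KM)\<close>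
  while \<open>Pr[accepted] = 1/M\<close>.\<close>

lemma prob_space_uniform_unit: "prob_space (uniform_measure lborel {0..1::real})"
  by (rule prob_space_uniform_measure) auto

lemma measure_uniform_unit_less:
  assumes "0 \<le> c" "c \<le> 1"
  shows "measure (uniform_measure lborel {0..1::real}) {u. u < c} = c"
proof -
  have "{u. u < c} = {..<c}" "{0..1} \<inter> {..<c} = {0..<c}" using assms by auto
  then show ?thesis using assms by (simp add: measure_uniform_measure)
qed

lemma prob_space_proc: "prob_space P \<Longrightarrow> prob_space (proc P)"
  unfolding proc_def by (rule prob_space_pair[OF _ prob_space_uniform_unit])

lemma space_proc: "space (proc P) = space P \<times> UNIV"
  by (simp add: proc_def space_pair_measure)

lemma measure_proc_thinning:
  assumes P: "prob_space P" and fin: "finite J"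
    and E: "\<And>j. j \<in> J \<Longrightarrow> E j \<in> sets P" and disj: "disjoint_family_on E J"
    and c: "\<And>j. j \<in> J \<Longrightarrow> 0 \<le> c j \<and> c j \<le> 1"
  shows "measure (proc P) (\<Union>j\<in>J. E j \<times> {u. u < c j}) = (\<Sum>j\<in>J. measure P (E j) * c j)"
proof -
  let ?Q = "uniform_measure lborel {0..1::real}"
  interpret Q: prob_space ?Q by (rule prob_space_uniform_unit)
  interpret P: prob_space P by (rule P)
  interpret PP: prob_space "proc P" by (rule prob_space_proc[OF P])
  have sets: "\<And>j. j \<in> J \<Longrightarrow> E j \<times> {u. u < c j} \<in> sets (proc P)"
    unfolding proc_def using E by (intro pair_measureI) auto
  have "measure (proc P) (\<Union>j\<in>J. E j \<times> {u. u < c j})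
      = (\<Sum>j\<in>J. measure (proc P) (E j \<times> {u. u < c j}))"
    using sets disj
    by (intro measure_finite_Union[OF fin]) (auto simp: disjoint_family_on_def PP.emeasure_eq_measure)
  also have "\<dots> = (\<Sum>j\<in>J. measure P (E j) * c j)"
  proof (rule sum.cong[OF refl])
    fix j assume j: "j \<in> J"
    have "emeasure (proc P) (E j \<times> {u. u < c j}) = emeasure P (E j) * emeasure ?Q {u. u < c j}"
      unfolding proc_def using E[OF j] by (intro Q.emeasure_pair_measure_Times) auto
    then show "measure (proc P) (E j \<times> {u. u < c j}) = measure P (E j) * c j"
      using measure_uniform_unit_less[of "c j"] c[OF j]
      by (simp add: P.emeasure_eq_measure Q.emeasure_eq_measure
          PP.emeasure_eq_measure ennreal_mult''[symmetric])
  qed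
  finally show ?thesis .
qed

lemma measure_accepted_Int:
  assumes P: "prob_space P" and fin: "finite J"
    and zhat_J: "\<forall>w\<in>space P. zhat (fst w) \<in> J"
    and zhat_sets: "\<forall>j\<in>J. {w \<in> space P. zhat (fst w) = j} \<in> sets P"
    and B: "B \<in> sets P"
    and \<rho>: "\<And>j. j \<in> J \<Longrightarrow> 0 \<le> \<rho> j \<and> \<rho> j \<le> 1"
  shows "measure (proc P) ({p \<in> space (proc P). fst p \<in> B} \<inter> accepted P zhat \<rho>)
    = (\<Sum>j\<in>J. measure P {w \<in> B. zhat (fst w) = j} * \<rho> j)"
proof -
  define E where "E j = {w \<in> B. zhat (fst w) = j}" for j
  have "B \<subseteq> space P" using B by (rule sets.sets_into_space)
  then have "{p \<in> space (proc P). fst p \<in> B} \<inter> accepted P zhat \<rho> = (\<Union>j\<in>J. E j \<times> {u. u < \<rho> j})"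
    using zhat_J by (auto simp: accepted_def space_proc E_def)
  moreover have "E j = B \<inter> {w \<in> space P. zhat (fst w) = j}" for j
    using \<open>B \<subseteq> space P\<close> by (auto simp: E_def)
  then have "\<And>j. j \<in> J \<Longrightarrow> E j \<in> sets P" using B zhat_sets by auto
  moreover have "disjoint_family_on E J" by (auto simp: disjoint_family_on_def E_def)
  ultimately show ?thesis
    using measure_proc_thinning[OF P fin, of E \<rho>] \<rho> unfolding E_def by presburger
qed

lemma distU_eq_0_iff: "distU K J q A = 0 \<longleftrightarrow> (\<forall>i\<in>{1..K}. rowmul J q A i = 1 / real K)"
proof -
  have "distU K J q A = 0 \<longleftrightarrow> (\<Sum>i\<in>{1..K}. (rowmul J q A i - 1 / real K)\<^sup>2) = 0"
    by (simp add: distU_def)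
  also have "\<dots> \<longleftrightarrow> (\<forall>i\<in>{1..K}. (rowmul J q A i - 1 / real K)\<^sup>2 = 0)"
    by (rule sum_nonneg_eq_0_iff) auto
  finally show ?thesis by (simp only: zero_eq_power2 right_minus_eq)
qed

lemma rowmul_uniform_if_minimizer:
  assumes min: "\<forall>q'. stochastic J q' \<longrightarrow> distU K J q A \<le> distU K J q' A"
    and "U_in_hull K J A"
  shows "\<forall>i\<in>{1..K}. rowmul J q A i = 1 / real K"
proof -
  obtain q0 where "stochastic J q0" "distU K J q0 A = 0"
    using \<open>U_in_hull K J A\<close> by (auto simp: U_in_hull_def distU_eq_0_iff)
  then have "distU K J q A \<le> 0" using min by metis
  moreover have "distU K J q A \<ge> 0" by (simp add: distU_def sum_nonneg)
  ultimately have "distU K J q A = 0" by simp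
  then show ?thesis by (simp only: distU_eq_0_iff)
qed

lemma Max_ratio_pos:
  assumes "finite J" "stochastic J q" "\<forall>j\<in>J. r j > 0"
  shows "Max ((\<lambda>j. q j / r j) ` J) > 0"
proof -
  obtain j where j: "j \<in> J" "q j > 0"
    using assms(2) sum_nonpos[of J q] by (force simp: stochastic_def not_less)
  then have "0 < q j / r j" using assms(3) by simp
  also have "\<dots> \<le> Max ((\<lambda>j. q j / r j) ` J)" using assms(1) j by simp
  finally show ?thesis .
qed

lemma rho_bounded:
  assumes "finite J" "stochastic J q" "\<forall>j\<in>J. r j > 0" "j \<in> J"
  shows "0 \<le> rho J q r j \<and> rho J q r j \<le> 1"
proof -
  have "0 \<le> q j" "0 < r j" using assms(2-4) by (auto simp: stochastic_def)
  then have "0 \<le> q j / r j" by simp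
  moreover have "q j / r j \<le> Max ((\<lambda>j. q j / r j) ` J)" using assms(1,4) by simp
  ultimately show ?thesis
    using Max_ratio_pos[OF assms(1-3)] unfolding rho_def
    by (metis divide_le_eq_1_pos divide_nonneg_pos)
qed

lemma measure_accepted_rho_Int:
  assumes P: "prob_space P" and fin: "finite J"
    and zhat_J: "\<forall>w\<in>space P. zhat (fst w) \<in> J"
    and zhat_sets: "\<forall>j\<in>J. {w \<in> space P. zhat (fst w) = j} \<in> sets P"
    and r: "\<forall>j\<in>J. rhat P zhat j > 0" and q: "stochastic J q"
    and B: "B \<in> sets P"
  shows "measure (proc P) ({p \<in> space (proc P). fst p \<in> B} \<inter> accepted P zhat (rho J q (rhat P zhat)))
    = (\<Sum>j\<in>J. q j * (measure P {w \<in> B. zhat (fst w) = j} / rhat P zhat j))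
      / Max ((\<lambda>j. q j / rhat P zhat j) ` J)"
proof -
  have "measure (proc P) ({p \<in> space (proc P). fst p \<in> B} \<inter> accepted P zhat (rho J q (rhat P zhat)))
      = (\<Sum>j\<in>J. measure P {w \<in> B. zhat (fst w) = j} * rho J q (rhat P zhat) j)"
    by (rule measure_accepted_Int[OF P fin zhat_J zhat_sets B rho_bounded[OF fin q r]])
  also have "\<dots> = (\<Sum>j\<in>J. q j * (measure P {w \<in> B. zhat (fst w) = j} / rhat P zhat j))
      / Max ((\<lambda>j. q j / rhat P zhat j) ` J)"
    unfolding sum_divide_distrib by (intro sum.cong) (auto simp: rho_def)
  finally show ?thesis .
qed

theorem lemma2:
  fixes P :: "('x \<times> 'y \<times> nat) measure"
    and zhat :: "'x \<Rightarrow> 'j" and J :: "'j set" and K :: nat and q :: "'j \<Rightarrow> real"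
  assumes "prob_space P"
    and "K \<ge> 1"
    and "\<forall>w\<in>space P. zattr w \<in> {1..K}"
    and "\<forall>i. {w \<in> space P. zattr w = i} \<in> sets P"
    and "finite J"
    and "\<forall>w\<in>space P. zhat (fst w) \<in> J"
    and "\<forall>j\<in>J. {w \<in> space P. zhat (fst w) = j} \<in> sets P"
    and "\<forall>j\<in>J. rhat P zhat j > 0"
    and "stochastic J q"
    and "\<forall>q'. stochastic J q' \<longrightarrow> distU K J q (amat P zhat) \<le> distU K J q' (amat P zhat)"
    and "U_in_hull K J (amat P zhat)"
  shows "\<forall>i\<in>{1..K}.
     measure (proc P) ({p \<in> space (proc P). zattr (fst p) = i}
                       \<inter> accepted P zhat (rho J q (rhat P zhat)))
       / measure (proc P) (accepted P zhat (rho J q (rhat P zhat)))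
     = 1 / real K"
proof
  fix i :: nat assume i: "i \<in> {1..K}"
  let ?\<rho> = "rho J q (rhat P zhat)" and ?Z = "{w \<in> space P. zattr w = i}"
  let ?acc = "accepted P zhat ?\<rho>" and ?Zacc = "{p \<in> space (proc P). zattr (fst p) = i}"
  define M where "M = Max ((\<lambda>j. q j / rhat P zhat j) ` J)"
  note accepted_mass = measure_accepted_rho_Int[OF assms(1,5-9), folded M_def]
  have "{p \<in> space (proc P). fst p \<in> space P} \<inter> ?acc = ?acc"
    by (auto simp: accepted_def space_proc)
  then have "measure (proc P) ?acc
      = (\<Sum>j\<in>J. q j * (measure P {w \<in> space P. zhat (fst w) = j} / rhat P zhat j)) / M"
    using accepted_mass[of "space P"] by simp
  also have "(\<Sum>j\<in>J. q j * (measure P {w \<in> space P. zhat (fst w) = j} / rhat P zhat j)) = sum q J"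
    using assms(8) by (intro sum.cong) (auto simp: rhat_def)
  also have "sum q J = 1"
    using assms(9) by (simp add: stochastic_def)
  finally have den: "measure (proc P) ?acc = 1 / M" .
  have "{p \<in> space (proc P). fst p \<in> ?Z} = ?Zacc"
    by (auto simp: space_proc)
  moreover have "{w \<in> ?Z. zhat (fst w) = j} = {w \<in> space P. zattr w = i \<and> zhat (fst w) = j}" for j
    by auto
  ultimately have "measure (proc P) (?Zacc \<inter> ?acc) = rowmul J q (amat P zhat) i / M"
    using accepted_mass[of ?Z] assms(4) by (simp add: rowmul_def amat_def)
  then have num: "measure (proc P) (?Zacc \<inter> ?acc) = 1 / real K / M"
    using rowmul_uniform_if_minimizer[OF assms(10,11)] i by simp
  have "M > 0" unfolding M_def by (rule Max_ratio_pos[OF assms(5,9,8)])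
  with num den show "measure (proc P) (?Zacc \<inter> ?acc) / measure (proc P) ?acc = 1 / real K"
    by simp
qed

end
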